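(* Let $\alpha,\beta,\gamma\in\mathbb{C}$ with $\beta,\gamma\notin\{q^{-n}:n\in\mathbb{N}_0\}$. Then, as formal power series in $x,y$: (i) $\mathbf{H}_6(\alpha q;\beta;q,x,y)=\mathbf{H}_6(\alpha;\beta;q,x,y)+\frac{\alpha x(1-\alpha q)}{1-\beta}\mathbf{H}_6(\alpha q^2;\beta q;q,x,y)+\frac{\alpha xq(1-\alpha q)}{1-\beta}\mathbf{H}_6(\alpha q^2;\beta q;q,xq,y)+\frac{\alpha y}{1-\beta}\mathbf{H}_6(\alpha q;\beta q;q,xq^2,y)$; (ii) $\mathbf{H}_6(\alpha q;\beta;q,x,y)=\mathbf{H}_6(\alpha;\beta;q,x,y)+\frac{\alpha y}{1-\beta}\mathbf{H}_6(\alpha q;\beta q;q,x,y)+\frac{\alpha xq(1-\alpha q)}{1-\beta}\mathbf{H}_6(\alpha q^2;\beta q;q,xq,yq)+\frac{\alpha x(1-\alpha q)}{1-\beta}\mathbf{H}_6(\alpha q^2;\beta q;q,x,yq)$; (iii) $\mathbf{H}_7(\alpha q;\beta,\gamma;q,x,y)=\mathbf{H}_7(\alpha;\beta,\gamma;q,x,y)+\frac{\alpha x(1-\alpha q)}{1-\beta}\mathbf{H}_7(\alpha q^2;\beta q,\gamma;q,x,y)+\frac{\alpha xq(1-\alpha q)}{1-\beta}\mathbf{H}_7(\alpha q^2;\beta q,\gamma;q,xq,y)+\frac{\alpha y}{1-\gamma}\mathbf{H}_7(\alpha q;\beta,\gamma q;q,xq^2,y)$; (iv) $\mathbf{H}_7(\alpha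 q;\beta,\gamma;q,x,y)=\mathbf{H}_7(\alpha;\beta,\gamma;q,x,y)+\frac{\alpha y}{1-\gamma}\mathbf{H}_7(\alpha q;\beta,\gamma q;q,x,y)+\frac{\alpha xq(1-\alpha q)}{1-\beta}\mathbf{H}_7(\alpha q^2;\beta q,\gamma;q,xq,yq)+\frac{\alpha x(1-\alpha q)}{1-\beta}\mathbf{H}_7(\alpha q^2;\beta q,\gamma;q,x,yq)$.
   Context: Fix $q\in\mathbb{C}$ with $0<|q|<1$. For $a\in\mathbb{C}$ and $n\in\mathbb{N}_0$ the $q$-shifted factorial is $(a;q)_0=1$, $(a;q)_n=\prod_{k=0}^{n-1}(1-aq^k)$. For $\alpha\in\mathbb{C}$ and $\beta,\gamma\in\mathbb{C}\setminus\{q^{-n}:n\in\mathbb{N}_0\}$ the basic Horn functions are the double power series $\mathbf{H}_6(\alpha;\beta;q,x,y)=\sum_{r,s\ge0}\frac{(\alpha;q)_{2r+s}}{(\beta;q)_{r+s}(q;q)_r(q;q)_s}x^ry^s$ and $\mathbf{H}_7(\alpha;\beta,\gamma;q,x,y)=\sum_{r,s\ge0}\frac{(\alpha;q)_{2r+s}}{(\beta;q)_{r}(\gamma;q)_s(q;q)_r(q;q)_s}x^ry^s$. Expressions such as $\mathbf{H}_6(\alpha;\beta;q,xq,y)$ denote the series with $x$ replaced by $qx$ (and similarly for $y$). Identities are identities of formal power series in $x,y$ (equivalently of analytic functions near the origin). *)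

theory Defs
  imports Complex_Main "HOL-Computational_Algebra.Formal_Power_Series"
begin

definition qpoch :: "complex \<Rightarrow> complex \<Rightarrow> nat \<Rightarrow> complex" where
  "qpoch a q n = (\<Prod>k<n. (1 - a * q ^ k))"

text \<open>Formal power series in two variables x, y are modelled as
  complex fps fps: the outer variable is x, the inner variable is y.
  So x corresponds to fps_X and y to fps_const fps_X.\<close>

abbreviation fpsx :: "complex fps fps" where "fpsx \<equiv> fps_X"
abbreviation fpsy :: "complex fps fps" where "fpsy \<equiv> fps_const fps_X"
abbreviation cst2 :: "complex \<Rightarrow> complex fps fps" where "cst2 c \<equiv> fps_const (fps_const c)"

text \<open>H6 alpha beta q a b denotes the series H_6(alpha;beta;q,a x,b y),
  i.e. the basic Horn series with x replaced by a x and y by b y.\<close>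
definition H6 :: "complex \<Rightarrow> complex \<Rightarrow> complex \<Rightarrow> complex \<Rightarrow> complex \<Rightarrow> complex fps fps" where
  "H6 \<alpha> \<beta> q a b = Abs_fps (\<lambda>r. Abs_fps (\<lambda>s.
      qpoch \<alpha> q (2*r+s) / (qpoch \<beta> q (r+s) * qpoch q q r * qpoch q q s) * a ^ r * b ^ s))"

definition H7 :: "complex \<Rightarrow> complex \<Rightarrow> complex \<Rightarrow> complex \<Rightarrow> complex \<Rightarrow> complex \<Rightarrow> complex fps fps" where
  "H7 \<alpha> \<beta> \<gamma> q a b = Abs_fps (\<lambda>r. Abs_fps (\<lambda>s.
      qpoch \<alpha> q (2*r+s) / (qpoch \<beta> q r * qpoch \<gamma> q s * qpoch q q r * qpoch q q s) * a ^ r * b ^ s))"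

end

theory Submission
  imports Defs
begin

(* Both H6 and H7 are instances of one series whose (r,s)-coefficient is
   (alpha;q)_(2r+s) / (D r s (q;q)_r (q;q)_s), with denominators satisfying
   D (r+1) s = u Dx r s and D r (s+1) = v Dy r s. Coefficientwise the identities
   come from (alpha q;q)_N = (alpha;q)_N + alpha (1 - q^N) (alpha q;q)_(N-1) with N = 2r+s,
   after splitting 1 - q^(2r+s) as (1 - q^(2r)) + q^(2r) (1 - q^s) or as
   (1 - q^s) + q^s (1 - q^(2r)). The factor 1 - q^s cancels against (q;q)_s, producing
   a y-shift; the factor 1 - q^(2r) = (1 - q^r)(1 + q^r) cancels against (q;q)_r,
   and 1 + q^r yields the two x-shifted terms. *)

abbreviation coeff2 :: "complex fps fps \<Rightarrow> nat \<Rightarrow> nat \<Rightarrow> complex" where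
  "coeff2 F r s \<equiv> fps_nth (fps_nth F r) s"

lemma coeff2_const_X_mult:
  "coeff2 (cst2 c * fpsx * F) r s = (if r = 0 then 0 else c * coeff2 F (r - 1) s)"
  by (cases r) (simp_all add: mult.assoc)

lemma coeff2_const_Y_mult:
  "coeff2 (cst2 c * fpsy * F) r s = (if s = 0 then 0 else c * coeff2 F r (s - 1))"
  by (cases s) (simp_all add: mult.assoc)

lemma qpoch_Suc: "qpoch a q (Suc n) = qpoch a q n * (1 - a * q ^ n)"
  by (simp add: qpoch_def)

lemma qpoch_Suc_shift: "qpoch a q (Suc n) = (1 - a) * qpoch (a * q) q n"
  unfolding qpoch_def by (simp add: prod.lessThan_Suc_shift mult.assoc del: prod.lessThan_Suc)

lemma qpoch_mult_q: "qpoch (a * q) q n = qpoch a q n + a * (1 - q ^ n) * qpoch (a * q) q (n - 1)"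
proof (cases n)
  case (Suc m)
  then show ?thesis by (simp add: qpoch_Suc[of "a * q" q m] qpoch_Suc_shift[of a q m] algebra_simps)
qed (simp add: qpoch_def)

lemma qpoch_qq_nonzero:
  assumes "\<And>k. q ^ Suc k \<noteq> 1"
  shows "qpoch q q n \<noteq> 0"
  using assms unfolding qpoch_def by (auto simp: prod_zero_iff)

lemma power_Suc_neq_one_if_norm_less_one:
  fixes q :: "'a :: real_normed_div_algebra"
  assumes "norm q < 1"
  shows "q ^ Suc k \<noteq> 1"
proof -
  have "norm q ^ Suc k < 1"
    using assms power_less_one_iff[of "norm q" "Suc k"] by simp
  then show ?thesis
    by (metis norm_one norm_power order.irrefl)
qed

definition qhorn :: "complex \<Rightarrow> (nat \<Rightarrow> nat \<Rightarrow> complex) \<Rightarrow> complex \<Rightarrow> complex \<Rightarrow> complex \<Rightarrow> complex fps fps" where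
  "qhorn \<alpha> D q a b = Abs_fps (\<lambda>r. Abs_fps (\<lambda>s.
      qpoch \<alpha> q (2*r+s) / (D r s * qpoch q q r * qpoch q q s) * a ^ r * b ^ s))"

lemma coeff2_qhorn:
  "coeff2 (qhorn \<alpha> D q a b) r s = qpoch \<alpha> q (2*r+s) / (D r s * qpoch q q r * qpoch q q s) * a ^ r * b ^ s"
  by (simp add: qhorn_def)

lemma H6_eq_qhorn: "H6 \<alpha> \<beta> q a b = qhorn \<alpha> (\<lambda>r s. qpoch \<beta> q (r + s)) q a b"
  by (simp add: H6_def qhorn_def)

lemma H7_eq_qhorn: "H7 \<alpha> \<beta> \<gamma> q a b = qhorn \<alpha> (\<lambda>r s. qpoch \<beta> q r * qpoch \<gamma> q s) q a b"
  by (simp add: H7_def qhorn_def)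

lemma coeff2_qhorn_X_terms:
  assumes q: "\<And>k. q ^ Suc k \<noteq> 1" and Dx: "\<And>r s. D (Suc r) s = u * Dx r s" and "u \<noteq> 0"
  shows "coeff2 (cst2 (\<alpha>*(1-\<alpha>*q)/u) * fpsx * qhorn (\<alpha>*q^2) Dx q 1 b
           + cst2 (\<alpha>*q*(1-\<alpha>*q)/u) * fpsx * qhorn (\<alpha>*q^2) Dx q q b) r s
       = \<alpha> * (1 - q^(2*r)) * qpoch (\<alpha>*q) q (2*r+s-1) * b^s / (D r s * qpoch q q r * qpoch q q s)"
proof (cases r)
  case (Suc i)
  have nonzero: "qpoch q q i \<noteq> 0" "qpoch q q s \<noteq> 0" "1 - q * q ^ i \<noteq> 0"
    using qpoch_qq_nonzero[OF q] q[of i] by auto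
  have \<alpha>_shift: "qpoch (\<alpha>*q) q (2*r+s-1) = (1 - \<alpha>*q) * qpoch (\<alpha>*q^2) q (2*i+s)"
    using qpoch_Suc_shift[of "\<alpha>*q" q "2*i+s"] Suc by (simp add: power2_eq_square mult.assoc)
  have q_Suc: "qpoch q q r = qpoch q q i * (1 - q * q ^ i)"
    using Suc by (simp add: qpoch_Suc)
  have square_diff: "1 - q^(2*r) = (1 - q * q ^ i) * (1 + q * q ^ i)"
    using Suc by (simp add: power_mult power2_eq_square algebra_simps)
  have D_Suc: "D r s = u * Dx i s"
    using Suc Dx by simp
  show ?thesis
    unfolding \<alpha>_shift q_Suc square_diff D_Suc
    using Suc nonzero \<open>u \<noteq> 0\<close>
    \<comment> \<open>if \<open>Dx i s = 0\<close> both sides are 0 by \<open>x / 0 = 0\<close>, so D need not be nonvanishing\<close>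
    by (cases "Dx i s = 0") (simp_all add: coeff2_const_X_mult coeff2_qhorn field_simps)
qed (simp add: coeff2_const_X_mult)

lemma coeff2_qhorn_Y_term:
  assumes q: "\<And>k. q ^ Suc k \<noteq> 1" and Dy: "\<And>r s. D r (Suc s) = v * Dy r s" and "v \<noteq> 0"
  shows "coeff2 (cst2 (\<alpha>/v) * fpsy * qhorn (\<alpha>*q) Dy q a 1) r s
       = \<alpha> * (1 - q^s) * qpoch (\<alpha>*q) q (2*r+s-1) * a^r / (D r s * qpoch q q r * qpoch q q s)"
proof (cases s)
  case (Suc j)
  have nonzero: "qpoch q q r \<noteq> 0" "qpoch q q j \<noteq> 0" "1 - q * q ^ j \<noteq> 0"
    using qpoch_qq_nonzero[OF q] q[of j] by auto
  have q_Suc: "qpoch q q s = qpoch q q j * (1 - q * q ^ j)"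
    using Suc by (simp add: qpoch_Suc)
  have D_Suc: "D r s = v * Dy r j"
    using Suc Dy by simp
  show ?thesis
    unfolding q_Suc D_Suc
    using Suc nonzero \<open>v \<noteq> 0\<close>
    by (cases "Dy r j = 0") (simp_all add: coeff2_const_Y_mult coeff2_qhorn field_simps)
qed (simp add: coeff2_const_Y_mult)

lemma coeff2_qhorn_mult_q:
  "coeff2 (qhorn (\<alpha>*q) D q 1 1) r s = coeff2 (qhorn \<alpha> D q 1 1) r s
     + \<alpha> * (1 - q^(2*r+s)) * qpoch (\<alpha>*q) q (2*r+s-1) / (D r s * qpoch q q r * qpoch q q s)"
  by (simp add: coeff2_qhorn qpoch_mult_q[of \<alpha> q "2*r+s"] add_divide_distrib)

lemma qhorn_contiguous_X_first:
  assumes q: "\<And>k. q ^ Suc k \<noteq> 1"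
    and Dx: "\<And>r s. D (Suc r) s = u * Dx r s" and "u \<noteq> 0"
    and Dy: "\<And>r s. D r (Suc s) = v * Dy r s" and "v \<noteq> 0"
  shows "qhorn (\<alpha>*q) D q 1 1 = qhorn \<alpha> D q 1 1
      + cst2 (\<alpha>*(1-\<alpha>*q)/u) * fpsx * qhorn (\<alpha>*q^2) Dx q 1 1
      + cst2 (\<alpha>*q*(1-\<alpha>*q)/u) * fpsx * qhorn (\<alpha>*q^2) Dx q q 1
      + cst2 (\<alpha>/v) * fpsy * qhorn (\<alpha>*q) Dy q (q^2) 1"
proof (intro fps_ext)
  fix r s
  let ?P = "qpoch (\<alpha>*q) q (2*r+s-1)" and ?den = "D r s * qpoch q q r * qpoch q q s"
  have "coeff2 (qhorn (\<alpha>*q) D q 1 1) r s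
      = coeff2 (qhorn \<alpha> D q 1 1) r s + \<alpha> * (1 - q^(2*r+s)) * ?P / ?den"
    by (rule coeff2_qhorn_mult_q)
  also have "\<alpha> * (1 - q^(2*r+s)) * ?P / ?den
      = \<alpha> * (1 - q^(2*r)) * ?P * 1^s / ?den + \<alpha> * (1 - q^s) * ?P * q^(2*r) / ?den"
    by (simp add: power_add algebra_simps add_divide_distrib[symmetric])
  finally show "coeff2 (qhorn (\<alpha>*q) D q 1 1) r s = coeff2 (qhorn \<alpha> D q 1 1
      + cst2 (\<alpha>*(1-\<alpha>*q)/u) * fpsx * qhorn (\<alpha>*q^2) Dx q 1 1
      + cst2 (\<alpha>*q*(1-\<alpha>*q)/u) * fpsx * qhorn (\<alpha>*q^2) Dx q q 1
      + cst2 (\<alpha>/v) * fpsy * qhorn (\<alpha>*q) Dy q (q^2) 1) r s"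
    using coeff2_qhorn_X_terms[of q D u Dx \<alpha> 1 r s, OF q Dx \<open>u \<noteq> 0\<close>]
      coeff2_qhorn_Y_term[of q D v Dy \<alpha> "q^2" r s, OF q Dy \<open>v \<noteq> 0\<close>]
    by (simp add: add.assoc power_mult)
qed

lemma qhorn_contiguous_Y_first:
  assumes q: "\<And>k. q ^ Suc k \<noteq> 1"
    and Dx: "\<And>r s. D (Suc r) s = u * Dx r s" and "u \<noteq> 0"
    and Dy: "\<And>r s. D r (Suc s) = v * Dy r s" and "v \<noteq> 0"
  shows "qhorn (\<alpha>*q) D q 1 1 = qhorn \<alpha> D q 1 1
      + cst2 (\<alpha>/v) * fpsy * qhorn (\<alpha>*q) Dy q 1 1
      + cst2 (\<alpha>*q*(1-\<alpha>*q)/u) * fpsx * qhorn (\<alpha>*q^2) Dx q q q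
      + cst2 (\<alpha>*(1-\<alpha>*q)/u) * fpsx * qhorn (\<alpha>*q^2) Dx q 1 q"
proof (intro fps_ext)
  fix r s
  let ?P = "qpoch (\<alpha>*q) q (2*r+s-1)" and ?den = "D r s * qpoch q q r * qpoch q q s"
  have "coeff2 (qhorn (\<alpha>*q) D q 1 1) r s
      = coeff2 (qhorn \<alpha> D q 1 1) r s + \<alpha> * (1 - q^(2*r+s)) * ?P / ?den"
    by (rule coeff2_qhorn_mult_q)
  also have "\<alpha> * (1 - q^(2*r+s)) * ?P / ?den
      = \<alpha> * (1 - q^s) * ?P * 1^r / ?den + \<alpha> * (1 - q^(2*r)) * ?P * q^s / ?den"
    by (simp add: power_add algebra_simps add_divide_distrib[symmetric])
  finally show "coeff2 (qhorn (\<alpha>*q) D q 1 1) r s = coeff2 (qhorn \<alpha> D q 1 1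
      + cst2 (\<alpha>/v) * fpsy * qhorn (\<alpha>*q) Dy q 1 1
      + cst2 (\<alpha>*q*(1-\<alpha>*q)/u) * fpsx * qhorn (\<alpha>*q^2) Dx q q q
      + cst2 (\<alpha>*(1-\<alpha>*q)/u) * fpsx * qhorn (\<alpha>*q^2) Dx q 1 q) r s"
    using coeff2_qhorn_X_terms[of q D u Dx \<alpha> q r s, OF q Dx \<open>u \<noteq> 0\<close>]
      coeff2_qhorn_Y_term[of q D v Dy \<alpha> 1 r s, OF q Dy \<open>v \<noteq> 0\<close>]
    by (simp add: algebra_simps)
qed

theorem theorem2p1:
  fixes q \<alpha> \<beta> \<gamma> :: complex
  assumes "q \<noteq> 0" and "norm q < 1"
    and "\<forall>n::nat. \<beta> \<noteq> inverse (q ^ n)"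
    and "\<forall>n::nat. \<gamma> \<noteq> inverse (q ^ n)"
  shows
   "(H6 (\<alpha>*q) \<beta> q 1 1 = H6 \<alpha> \<beta> q 1 1
      + cst2 (\<alpha>*(1-\<alpha>*q)/(1-\<beta>)) * fpsx * H6 (\<alpha>*q^2) (\<beta>*q) q 1 1
      + cst2 (\<alpha>*q*(1-\<alpha>*q)/(1-\<beta>)) * fpsx * H6 (\<alpha>*q^2) (\<beta>*q) q q 1
      + cst2 (\<alpha>/(1-\<beta>)) * fpsy * H6 (\<alpha>*q) (\<beta>*q) q (q^2) 1) \<and>
   (H6 (\<alpha>*q) \<beta> q 1 1 = H6 \<alpha> \<beta> q 1 1
      + cst2 (\<alpha>/(1-\<beta>)) * fpsy * H6 (\<alpha>*q) (\<beta>*q) q 1 1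
      + cst2 (\<alpha>*q*(1-\<alpha>*q)/(1-\<beta>)) * fpsx * H6 (\<alpha>*q^2) (\<beta>*q) q q q
      + cst2 (\<alpha>*(1-\<alpha>*q)/(1-\<beta>)) * fpsx * H6 (\<alpha>*q^2) (\<beta>*q) q 1 q) \<and>
   (H7 (\<alpha>*q) \<beta> \<gamma> q 1 1 = H7 \<alpha> \<beta> \<gamma> q 1 1
      + cst2 (\<alpha>*(1-\<alpha>*q)/(1-\<beta>)) * fpsx * H7 (\<alpha>*q^2) (\<beta>*q) \<gamma> q 1 1
      + cst2 (\<alpha>*q*(1-\<alpha>*q)/(1-\<beta>)) * fpsx * H7 (\<alpha>*q^2) (\<beta>*q) \<gamma> q q 1
      + cst2 (\<alpha>/(1-\<gamma>)) * fpsy * H7 (\<alpha>*q) \<beta> (\<gamma>*q) q (q^2) 1) \<and>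
   (H7 (\<alpha>*q) \<beta> \<gamma> q 1 1 = H7 \<alpha> \<beta> \<gamma> q 1 1
      + cst2 (\<alpha>/(1-\<gamma>)) * fpsy * H7 (\<alpha>*q) \<beta> (\<gamma>*q) q 1 1
      + cst2 (\<alpha>*q*(1-\<alpha>*q)/(1-\<beta>)) * fpsx * H7 (\<alpha>*q^2) (\<beta>*q) \<gamma> q q q
      + cst2 (\<alpha>*(1-\<alpha>*q)/(1-\<beta>)) * fpsx * H7 (\<alpha>*q^2) (\<beta>*q) \<gamma> q 1 q)"
proof -
  have q: "q ^ Suc k \<noteq> 1" for k
    using \<open>norm q < 1\<close> by (rule power_Suc_neq_one_if_norm_less_one)
  have "1 - \<beta> \<noteq> 0" "1 - \<gamma> \<noteq> 0"
    using assms(3,4) by (metis inverse_1 power_0 right_minus_eq)+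
  let ?D6 = "\<lambda>r s. qpoch \<beta> q (r + s)" and ?E6 = "\<lambda>r s. qpoch (\<beta>*q) q (r + s)"
  let ?D7 = "\<lambda>r s. qpoch \<beta> q r * qpoch \<gamma> q s"
  let ?D7x = "\<lambda>r s. qpoch (\<beta>*q) q r * qpoch \<gamma> q s" and ?D7y = "\<lambda>r s. qpoch \<beta> q r * qpoch (\<gamma>*q) q s"
  have H6_shift: "?D6 (Suc r) s = (1 - \<beta>) * ?E6 r s" "?D6 r (Suc s) = (1 - \<beta>) * ?E6 r s" for r s
    by (simp_all add: qpoch_Suc_shift)
  have H7_shift: "?D7 (Suc r) s = (1 - \<beta>) * ?D7x r s" "?D7 r (Suc s) = (1 - \<gamma>) * ?D7y r s" for r s
    by (simp_all add: qpoch_Suc_shift)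
  show ?thesis
    unfolding H6_eq_qhorn H7_eq_qhorn
    using qhorn_contiguous_X_first[where D = ?D6 and Dx = ?E6 and Dy = ?E6,
            OF q H6_shift(1) \<open>1 - \<beta> \<noteq> 0\<close> H6_shift(2) \<open>1 - \<beta> \<noteq> 0\<close>]
      qhorn_contiguous_Y_first[where D = ?D6 and Dx = ?E6 and Dy = ?E6,
            OF q H6_shift(1) \<open>1 - \<beta> \<noteq> 0\<close> H6_shift(2) \<open>1 - \<beta> \<noteq> 0\<close>]
      qhorn_contiguous_X_first[where D = ?D7 and Dx = ?D7x and Dy = ?D7y,
            OF q H7_shift(1) \<open>1 - \<beta> \<noteq> 0\<close> H7_shift(2) \<open>1 - \<gamma> \<noteq> 0\<close>]
      qhorn_contiguous_Y_first[where D = ?D7 and Dx = ?D7x and Dy = ?D7y,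
            OF q H7_shift(1) \<open>1 - \<beta> \<noteq> 0\<close> H7_shift(2) \<open>1 - \<gamma> \<noteq> 0\<close>]
    by blast
qed

end
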